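(* Let $\mathcal C$ be a coalgebra, $g\in\mathcal C$ a group-like element and $\Lambda\in\mathcal C$. If $g\in{}_\Lambda\mathcal V$ then $\dim L^g_{\mathcal V_\Lambda}=1$, and otherwise $\dim L^g_{\mathcal V_\Lambda}=0$. Moreover, an element $\phi\in L^g_{\mathcal V_\Lambda}$ is non-zero if and only if $\phi(\Lambda)\neq0$.
   Context: $k$ is a field; $\mathcal C$ is a coalgebra over $k$ with comultiplication $\Delta$ and dual $\mathcal C'$. A group-like element is a non-zero $g$ with $\Delta(g)=g\otimes g$. A left coideal is a subspace $V$ with $\Delta(V)\subset\mathcal C\otimes V$. For $\Lambda\in\mathcal C$, $\mathcal V_\Lambda=\{(\nu\otimes\mathrm{id})\Delta(\Lambda):\nu\in\mathcal C'\}$ (the smallest left coideal containing $\Lambda$) and ${}_\Lambda\mathcal V=\{(\mathrm{id}\otimes\nu)\Delta(\Lambda):\nu\in\mathcal C'\}$. For a left coideal $V$ and group-like $g$, a $g$-cointegral on $V$ is $\phi\in V'$ with $(\mathrm{id}\otimes\phi)(\Delta(a))=\phi(a)g$ for all $a\in V$; $L^g_V$ denotes the space of $g$-cointegrals on $V$. *)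

theory Defs
  imports Complex_Main "HOL-Library.Function_Algebras"
begin

text \<open>A tensor in C (x) C is
represented by a finite list of pairs [(x_1,y_1),...,(x_n,y_n)], standing for
the sum of x_i (x) y_i.  Since for vector spaces a tensor is determined by its
values on all mu (x) nu (mu, nu linear functionals), all equations between
tensors are stated through such evaluations, so that nothing depends on the
chosen representative.\<close>

definition lin_fun :: "('k::field \<Rightarrow> 'c::ab_group_add \<Rightarrow> 'c) \<Rightarrow> ('c \<Rightarrow> 'k) \<Rightarrow> bool" where
  "lin_fun sc \<nu> \<longleftrightarrow> (\<forall>x y. \<nu> (x + y) = \<nu> x + \<nu> y) \<and> (\<forall>c x. \<nu> (sc c x) = c * \<nu> x)"

definition tens_eval :: "('c \<Rightarrow> 'k::field) \<Rightarrow> ('c \<Rightarrow> 'k) \<Rightarrow> ('c \<times> 'c) list \<Rightarrow> 'k" where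
  "tens_eval \<mu> \<nu> t = (\<Sum>(x,y)\<leftarrow>t. \<mu> x * \<nu> y)"

definition lslice :: "('k::field \<Rightarrow> 'c::ab_group_add \<Rightarrow> 'c) \<Rightarrow> ('c \<Rightarrow> 'k) \<Rightarrow> ('c \<times> 'c) list \<Rightarrow> 'c" where
  "lslice sc \<nu> t = (\<Sum>(x,y)\<leftarrow>t. sc (\<nu> x) y)"

definition rslice :: "('k::field \<Rightarrow> 'c::ab_group_add \<Rightarrow> 'c) \<Rightarrow> ('c \<Rightarrow> 'k) \<Rightarrow> ('c \<times> 'c) list \<Rightarrow> 'c" where
  "rslice sc \<nu> t = (\<Sum>(x,y)\<leftarrow>t. sc (\<nu> y) x)"

definition coalgebra :: "('k::field \<Rightarrow> 'c::ab_group_add \<Rightarrow> 'c) \<Rightarrow> ('c \<Rightarrow> ('c \<times> 'c) list) \<Rightarrow> bool" where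
  "coalgebra sc \<Delta> \<longleftrightarrow>
     vector_space sc \<and>
     (\<forall>\<mu> \<nu>. lin_fun sc \<mu> \<and> lin_fun sc \<nu> \<longrightarrow> lin_fun sc (\<lambda>a. tens_eval \<mu> \<nu> (\<Delta> a))) \<and>
     (\<forall>\<mu> \<nu> \<rho> a. lin_fun sc \<mu> \<and> lin_fun sc \<nu> \<and> lin_fun sc \<rho> \<longrightarrow>
        (\<Sum>(x,y)\<leftarrow>\<Delta> a. tens_eval \<mu> \<nu> (\<Delta> x) * \<rho> y)
        = (\<Sum>(x,y)\<leftarrow>\<Delta> a. \<mu> x * tens_eval \<nu> \<rho> (\<Delta> y))) \<and>
     (\<exists>\<epsilon>. lin_fun sc \<epsilon> \<and> (\<forall>a. lslice sc \<epsilon> (\<Delta> a) = a \<and> rslice sc \<epsilon> (\<Delta> a) = a))"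

definition group_like :: "('k::field \<Rightarrow> 'c::ab_group_add \<Rightarrow> 'c) \<Rightarrow> ('c \<Rightarrow> ('c \<times> 'c) list) \<Rightarrow> 'c \<Rightarrow> bool" where
  "group_like sc \<Delta> g \<longleftrightarrow> g \<noteq> 0 \<and>
     (\<forall>\<mu> \<nu>. lin_fun sc \<mu> \<and> lin_fun sc \<nu> \<longrightarrow> tens_eval \<mu> \<nu> (\<Delta> g) = \<mu> g * \<nu> g)"

definition V_left :: "('k::field \<Rightarrow> 'c::ab_group_add \<Rightarrow> 'c) \<Rightarrow> ('c \<Rightarrow> ('c \<times> 'c) list) \<Rightarrow> 'c \<Rightarrow> 'c set" where
  "V_left sc \<Delta> \<Lambda> = {lslice sc \<nu> (\<Delta> \<Lambda>) | \<nu>. lin_fun sc \<nu>}"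

definition V_right :: "('k::field \<Rightarrow> 'c::ab_group_add \<Rightarrow> 'c) \<Rightarrow> ('c \<Rightarrow> ('c \<times> 'c) list) \<Rightarrow> 'c \<Rightarrow> 'c set" where
  "V_right sc \<Delta> \<Lambda> = {rslice sc \<nu> (\<Delta> \<Lambda>) | \<nu>. lin_fun sc \<nu>}"

text \<open>An element of the
dual V' is represented by a function 'c \<Rightarrow> 'k that is linear on V and vanishes
outside V (canonical representative).  Since Delta(V) lies in C (x) V, the
expression (id (x) phi)(Delta a) is computed with any linear extension psi of
phi to C (the value does not depend on the extension).\<close>
definition cointegrals :: "('k::field \<Rightarrow> 'c::ab_group_add \<Rightarrow> 'c) \<Rightarrow> ('c \<Rightarrow> ('c \<times> 'c) list) \<Rightarrow> 'c \<Rightarrow> 'c set \<Rightarrow> ('c \<Rightarrow> 'k) set" where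
  "cointegrals sc \<Delta> g V = {\<phi>.
     (\<forall>x\<in>V. \<forall>y\<in>V. \<phi> (x + y) = \<phi> x + \<phi> y) \<and>
     (\<forall>c. \<forall>x\<in>V. \<phi> (sc c x) = c * \<phi> x) \<and>
     (\<forall>x. x \<notin> V \<longrightarrow> \<phi> x = 0) \<and>
     (\<forall>\<psi>. lin_fun sc \<psi> \<and> (\<forall>x\<in>V. \<psi> x = \<phi> x) \<longrightarrow>
        (\<forall>a\<in>V. rslice sc \<psi> (\<Delta> a) = sc (\<phi> a) g))}"

definition fun_dim :: "('c \<Rightarrow> 'k::field) set \<Rightarrow> nat" where
  "fun_dim S = vector_space.dim (\<lambda>c f x. c * f x) S"

end

theory Submission imports Defs begin

text \<open>Evaluating the cointegral identity for \<open>\<phi>\<close> at \<open>\<Lambda>\<close> against a functional \<open>\<nu>\<close> gives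
\<open>\<phi>((\<nu> \<otimes> id)\<Delta>\<Lambda>) = \<phi>(\<Lambda>) \<nu>(g)\<close>, so a cointegral on \<open>\<V>\<^sub>\<Lambda>\<close> is determined by its value at \<open>\<Lambda>\<close>;
hence the cointegrals form a space of dimension at most one, and \<open>\<phi> \<noteq> 0\<close> iff \<open>\<phi>(\<Lambda>) \<noteq> 0\<close>.
If \<open>\<phi>(\<Lambda>) \<noteq> 0\<close> and \<open>\<psi>\<close> is any linear extension of \<open>\<phi>\<close>, the same identity says
\<open>(id \<otimes> \<psi>/\<phi>(\<Lambda>))\<Delta>\<Lambda> = g\<close>, so \<open>g \<in> \<^sub>\<Lambda>\<V>\<close>. Conversely, if \<open>g = (id \<otimes> \<mu>)\<Delta>\<Lambda>\<close>,
coassociativity shows that \<open>\<mu>\<close> restricted to \<open>\<V>\<^sub>\<Lambda>\<close> is a cointegral, and its value at \<open>\<Lambda>\<close>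
is \<open>\<epsilon>(g) = 1\<close>.\<close>

lemma lin_fun_zero: "lin_fun sc \<rho> \<Longrightarrow> \<rho> 0 = 0"
  unfolding lin_fun_def by (metis add.right_neutral add_left_cancel)

lemma lin_fun_const_zero: "lin_fun sc (\<lambda>x. 0)"
  unfolding lin_fun_def by auto

lemma lin_fun_add: "lin_fun sc \<mu> \<Longrightarrow> lin_fun sc \<nu> \<Longrightarrow> lin_fun sc (\<lambda>x. \<mu> x + \<nu> x)"
  unfolding lin_fun_def by (auto simp: algebra_simps)

lemma lin_fun_mult_left: "lin_fun sc \<nu> \<Longrightarrow> lin_fun sc (\<lambda>x. c * \<nu> x)"
  unfolding lin_fun_def by (auto simp: algebra_simps)

lemma tens_eval_mult_right: "tens_eval \<mu> (\<lambda>x. c * \<nu> x) t = c * tens_eval \<mu> \<nu> t"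
  unfolding tens_eval_def by (induction t) (auto simp: algebra_simps)

lemma vector_space_field: "vector_space ((*) :: 'k::field \<Rightarrow> 'k \<Rightarrow> 'k)"
  by unfold_locales (simp_all add: algebra_simps)

lemma vector_space_functions: "vector_space (\<lambda>c (f::'c \<Rightarrow> 'k::field) x. c * f x)"
  by unfold_locales (simp_all add: fun_eq_iff algebra_simps)

lemma fun_dim_eq_0:
  assumes "S \<subseteq> {\<lambda>_. 0}"
  shows "fun_dim S = 0"
proof -
  interpret vector_space "\<lambda>c (f::'c \<Rightarrow> 'k::field) x. c * f x"
    by (rule vector_space_functions)
  show ?thesis
    unfolding fun_dim_def
    by (rule dim_unique[of "{}"]) (use assms independent_empty in \<open>auto simp: zero_fun_def\<close>)
qed

lemma fun_dim_eq_1: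
  assumes "\<phi> \<in> S" "\<phi> \<noteq> (\<lambda>_. 0)" and multiples: "\<And>\<psi>. \<psi> \<in> S \<Longrightarrow> \<exists>c. \<psi> = (\<lambda>x. c * \<phi> x)"
  shows "fun_dim S = 1"
proof -
  interpret vector_space "\<lambda>c (f::'c \<Rightarrow> 'k::field) x. c * f x"
    by (rule vector_space_functions)
  have "S \<subseteq> span {\<phi>}"
    using multiples span_scale[OF span_base[of \<phi> "{\<phi>}"]] by blast
  then show ?thesis
    unfolding fun_dim_def using assms(1,2) by (intro dim_unique[of "{\<phi>}"]) (auto simp: zero_fun_def)
qed

context vector_space
begin

lemma lin_fun_iff_linear: "lin_fun scale f \<longleftrightarrow> Vector_Spaces.linear scale (*) f"
  using vector_space_axioms vector_space_field
  unfolding lin_fun_def Vector_Spaces.linear_iff by auto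

lemma lin_fun_lslice: "lin_fun scale \<rho> \<Longrightarrow> \<rho> (lslice scale \<nu> t) = tens_eval \<nu> \<rho> t"
  unfolding lslice_def tens_eval_def
  by (induction t) (auto simp: lin_fun_zero, simp add: lin_fun_def)

lemma lin_fun_rslice: "lin_fun scale \<rho> \<Longrightarrow> \<rho> (rslice scale \<nu> t) = tens_eval \<rho> \<nu> t"
  unfolding rslice_def tens_eval_def
  by (induction t) (auto simp: lin_fun_zero, simp add: lin_fun_def mult.commute)

lemma lin_fun_lslice_eq_rslice:
  "lin_fun scale \<mu> \<Longrightarrow> lin_fun scale \<nu> \<Longrightarrow> \<mu> (lslice scale \<nu> t) = \<nu> (rslice scale \<mu> t)"
  by (simp add: lin_fun_lslice lin_fun_rslice)

lemma lslice_add_functional: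
  "lslice scale (\<lambda>x. \<mu> x + \<nu> x) t = lslice scale \<mu> t + lslice scale \<nu> t"
  unfolding lslice_def by (induction t) (auto simp: scale_left_distrib algebra_simps)

lemma lslice_scale_functional: "lslice scale (\<lambda>x. c * \<nu> x) t = scale c (lslice scale \<nu> t)"
  unfolding lslice_def by (induction t) (auto simp: scale_right_distrib)

lemma lslice_zero_functional: "lslice scale (\<lambda>x. 0) t = 0"
  unfolding lslice_def by (induction t) auto

lemma lin_fun_extend_from_subspace:
  assumes V: "subspace V"
    and add: "\<forall>x\<in>V. \<forall>y\<in>V. \<phi> (x + y) = \<phi> x + \<phi> y"
    and hom: "\<forall>c. \<forall>x\<in>V. \<phi> (scale c x) = c * \<phi> x"
  obtains \<psi> where "lin_fun scale \<psi>" "\<forall>x\<in>V. \<psi> x = \<phi> x"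
proof -
  interpret pair: vector_space_pair scale "(*) :: 'a \<Rightarrow> 'a \<Rightarrow> 'a"
    using vector_space_axioms vector_space_field by (simp add: vector_space_pair_def)
  obtain B where B: "B \<subseteq> V" "independent B" "V \<subseteq> span B"
    using maximal_independent_subset by blast
  obtain \<psi> where lin: "lin_fun scale \<psi>" and on_B: "\<forall>x\<in>B. \<psi> x = \<phi> x"
    using pair.linear_independent_extend[OF B(2)] lin_fun_iff_linear by blast
  have "subspace {x \<in> V. \<psi> x = \<phi> x}"
  proof (rule subspaceI)
    show "0 \<in> {x \<in> V. \<psi> x = \<phi> x}"
      using subspace_0[OF V] hom lin_fun_zero[OF lin] by (force dest: spec[of _ 0])
  qed (use V add hom lin in \<open>auto simp: lin_fun_def subspace_add subspace_scale\<close>)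
  then have "span B \<subseteq> {x \<in> V. \<psi> x = \<phi> x}"
    using B(1) on_B by (intro span_minimal) auto
  with B(3) show thesis
    using lin that by blast
qed

lemma exists_lin_fun_nonzero:
  assumes "x \<noteq> 0"
  obtains \<rho> where "lin_fun scale \<rho>" "\<rho> x \<noteq> 0"
proof -
  interpret pair: vector_space_pair scale "(*) :: 'a \<Rightarrow> 'a \<Rightarrow> 'a"
    using vector_space_axioms vector_space_field by (simp add: vector_space_pair_def)
  obtain \<rho> where "Vector_Spaces.linear scale (*) \<rho>" "\<rho> x = 1"
    using pair.linear_independent_extend[of "{x}" "\<lambda>_. 1"] assms by auto
  then show thesis
    using that lin_fun_iff_linear by auto
qed

lemma eq_if_lin_funs_agree:
  assumes "\<And>\<rho>. lin_fun scale \<rho> \<Longrightarrow> \<rho> a = \<rho> b"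
  shows "a = b"
proof (rule ccontr)
  assume "a \<noteq> b"
  then obtain \<rho> where \<rho>: "lin_fun scale \<rho>" "\<rho> (a - b) \<noteq> 0"
    using exists_lin_fun_nonzero[of "a - b"] by auto
  have "\<rho> (a - b) + \<rho> b = \<rho> a"
    using \<rho>(1) unfolding lin_fun_def by (metis diff_add_cancel)
  then show False
    using \<rho> assms[OF \<rho>(1)] by auto
qed

end

locale coalgebra_space =
  fixes scale :: "'k::field \<Rightarrow> 'c::ab_group_add \<Rightarrow> 'c" and \<Delta> :: "'c \<Rightarrow> ('c \<times> 'c) list"
  assumes coalgebra: "coalgebra scale \<Delta>"
begin

sublocale vector_space scale
  using coalgebra unfolding coalgebra_def by blast

lemma lin_fun_tens_eval_comult:
  "lin_fun scale \<mu> \<Longrightarrow> lin_fun scale \<nu> \<Longrightarrow> lin_fun scale (\<lambda>a. tens_eval \<mu> \<nu> (\<Delta> a))"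
  using coalgebra unfolding coalgebra_def by blast

lemma coassoc:
  assumes "lin_fun scale \<mu>" "lin_fun scale \<nu>" "lin_fun scale \<rho>"
  shows "tens_eval (\<lambda>x. tens_eval \<mu> \<nu> (\<Delta> x)) \<rho> (\<Delta> a) = tens_eval \<mu> (\<lambda>y. tens_eval \<nu> \<rho> (\<Delta> y)) (\<Delta> a)"
  unfolding tens_eval_def[of "\<lambda>x. tens_eval \<mu> \<nu> (\<Delta> x)"] tens_eval_def[of \<mu> "\<lambda>y. tens_eval \<nu> \<rho> (\<Delta> y)"]
  using coalgebra assms unfolding coalgebra_def by blast

lemma group_like_comult:
  "group_like scale \<Delta> g \<Longrightarrow> lin_fun scale \<mu> \<Longrightarrow> lin_fun scale \<nu> \<Longrightarrow> tens_eval \<mu> \<nu> (\<Delta> g) = \<mu> g * \<nu> g"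
  unfolding group_like_def by blast

lemma obtain_counit:
  obtains \<epsilon> where "lin_fun scale \<epsilon>" "\<And>a. lslice scale \<epsilon> (\<Delta> a) = a"
  using coalgebra unfolding coalgebra_def by blast

lemma counit_group_like:
  assumes "group_like scale \<Delta> g" "lin_fun scale \<epsilon>" "\<And>a. lslice scale \<epsilon> (\<Delta> a) = a"
  shows "\<epsilon> g = 1"
proof -
  obtain \<rho> where \<rho>: "lin_fun scale \<rho>" "\<rho> g \<noteq> 0"
    using exists_lin_fun_nonzero assms(1) unfolding group_like_def by blast
  have "\<rho> g = \<rho> (lslice scale \<epsilon> (\<Delta> g))"
    using assms(3) by simp
  also have "\<dots> = tens_eval \<epsilon> \<rho> (\<Delta> g)"
    by (rule lin_fun_lslice[OF \<rho>(1)])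
  also have "\<dots> = \<epsilon> g * \<rho> g"
    using assms(1,2) \<rho>(1) by (rule group_like_comult)
  finally show ?thesis
    using \<rho>(2) by simp
qed

lemma lslice_mem_V_left: "lin_fun scale \<nu> \<Longrightarrow> lslice scale \<nu> (\<Delta> \<Lambda>) \<in> V_left scale \<Delta> \<Lambda>"
  unfolding V_left_def by blast

lemma mem_V_left_self: "\<Lambda> \<in> V_left scale \<Delta> \<Lambda>"
  by (metis obtain_counit lslice_mem_V_left)

lemma subspace_V_left: "subspace (V_left scale \<Delta> \<Lambda>)"
proof (rule subspaceI)
  show "0 \<in> V_left scale \<Delta> \<Lambda>"
    using lslice_mem_V_left[OF lin_fun_const_zero] by (simp add: lslice_zero_functional)
qed (auto simp: V_left_def intro: lin_fun_add lin_fun_mult_left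
    simp flip: lslice_add_functional lslice_scale_functional)

lemma cointegral_linear_extension:
  assumes "\<phi> \<in> cointegrals scale \<Delta> g (V_left scale \<Delta> \<Lambda>)"
  obtains \<psi> where "lin_fun scale \<psi>" "\<forall>x\<in>V_left scale \<Delta> \<Lambda>. \<psi> x = \<phi> x"
    "rslice scale \<psi> (\<Delta> \<Lambda>) = scale (\<phi> \<Lambda>) g"
proof -
  obtain \<psi> where "lin_fun scale \<psi>" "\<forall>x\<in>V_left scale \<Delta> \<Lambda>. \<psi> x = \<phi> x"
    using assms subspace_V_left lin_fun_extend_from_subspace unfolding cointegrals_def by blast
  with assms mem_V_left_self show thesis
    using that unfolding cointegrals_def by blast
qed

lemma cointegral_lslice:
  assumes "\<phi> \<in> cointegrals scale \<Delta> g (V_left scale \<Delta> \<Lambda>)" "lin_fun scale \<nu>"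
  shows "\<phi> (lslice scale \<nu> (\<Delta> \<Lambda>)) = \<phi> \<Lambda> * \<nu> g"
proof -
  obtain \<psi> where \<psi>: "lin_fun scale \<psi>" "\<forall>x\<in>V_left scale \<Delta> \<Lambda>. \<psi> x = \<phi> x"
    "rslice scale \<psi> (\<Delta> \<Lambda>) = scale (\<phi> \<Lambda>) g"
    using cointegral_linear_extension[OF assms(1)] by blast
  have "\<phi> (lslice scale \<nu> (\<Delta> \<Lambda>)) = \<psi> (lslice scale \<nu> (\<Delta> \<Lambda>))"
    using \<psi>(2) lslice_mem_V_left[OF assms(2)] by simp
  also have "\<dots> = \<nu> (rslice scale \<psi> (\<Delta> \<Lambda>))"
    using \<psi>(1) assms(2) by (rule lin_fun_lslice_eq_rslice)
  also have "\<dots> = \<phi> \<Lambda> * \<nu> g"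
    using \<psi>(3) assms(2) unfolding lin_fun_def by simp
  finally show ?thesis .
qed

lemma cointegral_eq_zero_iff:
  assumes "\<phi> \<in> cointegrals scale \<Delta> g (V_left scale \<Delta> \<Lambda>)"
  shows "\<phi> = (\<lambda>_. 0) \<longleftrightarrow> \<phi> \<Lambda> = 0"
proof
  assume "\<phi> \<Lambda> = 0"
  show "\<phi> = (\<lambda>_. 0)"
  proof
    fix x
    show "\<phi> x = 0"
    proof (cases "x \<in> V_left scale \<Delta> \<Lambda>")
      case True
      then obtain \<nu> where "lin_fun scale \<nu>" "x = lslice scale \<nu> (\<Delta> \<Lambda>)"
        unfolding V_left_def by blast
      then show ?thesis
        using cointegral_lslice[OF assms] \<open>\<phi> \<Lambda> = 0\<close> by simp
    next
      case False
      then show ?thesis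
        using assms unfolding cointegrals_def by simp
    qed
  qed
qed simp

lemma cointegral_multiple:
  assumes "\<phi> \<in> cointegrals scale \<Delta> g (V_left scale \<Delta> \<Lambda>)"
    and "\<phi>\<^sub>1 \<in> cointegrals scale \<Delta> g (V_left scale \<Delta> \<Lambda>)" "\<phi>\<^sub>1 \<Lambda> = 1"
  shows "\<phi> = (\<lambda>x. \<phi> \<Lambda> * \<phi>\<^sub>1 x)"
proof
  fix x
  show "\<phi> x = \<phi> \<Lambda> * \<phi>\<^sub>1 x"
  proof (cases "x \<in> V_left scale \<Delta> \<Lambda>")
    case True
    then obtain \<nu> where "lin_fun scale \<nu>" "x = lslice scale \<nu> (\<Delta> \<Lambda>)"
      unfolding V_left_def by blast
    then show ?thesis
      using cointegral_lslice[OF assms(1)] cointegral_lslice[OF assms(2)] assms(3) by simp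
  next
    case False
    then show ?thesis
      using assms(1,2) unfolding cointegrals_def by simp
  qed
qed

lemma V_right_if_cointegral_nonzero:
  assumes "\<phi> \<in> cointegrals scale \<Delta> g (V_left scale \<Delta> \<Lambda>)" "\<phi> \<Lambda> \<noteq> 0"
  shows "g \<in> V_right scale \<Delta> \<Lambda>"
proof -
  obtain \<psi> where \<psi>: "lin_fun scale \<psi>" "rslice scale \<psi> (\<Delta> \<Lambda>) = scale (\<phi> \<Lambda>) g"
    using cointegral_linear_extension[OF assms(1)] by blast
  define \<mu> where "\<mu> = (\<lambda>x. inverse (\<phi> \<Lambda>) * \<psi> x)"
  have "rslice scale \<mu> (\<Delta> \<Lambda>) = g"
  proof (rule eq_if_lin_funs_agree)
    fix \<rho> assume \<rho>: "lin_fun scale \<rho>"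
    have "\<rho> (rslice scale \<mu> (\<Delta> \<Lambda>)) = inverse (\<phi> \<Lambda>) * \<rho> (rslice scale \<psi> (\<Delta> \<Lambda>))"
      unfolding \<mu>_def lin_fun_rslice[OF \<rho>] by (rule tens_eval_mult_right)
    also have "\<dots> = \<rho> g"
      using \<psi>(2) \<rho> assms(2) unfolding lin_fun_def by simp
    finally show "\<rho> (rslice scale \<mu> (\<Delta> \<Lambda>)) = \<rho> g" .
  qed
  then show ?thesis
    using lin_fun_mult_left[OF \<psi>(1)] unfolding V_right_def \<mu>_def by blast
qed

lemma restriction_mem_cointegrals:
  assumes g: "group_like scale \<Delta> g" and \<mu>: "lin_fun scale \<mu>" "rslice scale \<mu> (\<Delta> \<Lambda>) = g"
  defines "V \<equiv> V_left scale \<Delta> \<Lambda>"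
  shows "(\<lambda>x. if x \<in> V then \<mu> x else 0) \<in> cointegrals scale \<Delta> g V"
    (is "?\<phi> \<in> _")
proof -
  have \<mu>_lslice: "\<mu> (lslice scale \<nu> (\<Delta> \<Lambda>)) = \<nu> g" if "lin_fun scale \<nu>" for \<nu>
    using lin_fun_lslice_eq_rslice[OF \<mu>(1) that] \<mu>(2) by simp
  have cointegral_identity: "rslice scale \<psi> (\<Delta> a) = scale (\<mu> a) g"
    if \<psi>: "lin_fun scale \<psi>" "\<forall>x\<in>V. \<psi> x = \<mu> x" and \<nu>: "lin_fun scale \<nu>"
      and a: "a = lslice scale \<nu> (\<Delta> \<Lambda>)" for \<psi> \<nu> a
  proof (rule eq_if_lin_funs_agree)
    fix \<rho> assume \<rho>: "lin_fun scale \<rho>"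
    define S where "S = (\<lambda>x. tens_eval \<nu> \<rho> (\<Delta> x))"
    have S: "lin_fun scale S"
      unfolding S_def using \<nu> \<rho> by (rule lin_fun_tens_eval_comult)
    have "\<rho> (rslice scale \<psi> (\<Delta> a)) = tens_eval \<nu> (\<lambda>y. tens_eval \<rho> \<psi> (\<Delta> y)) (\<Delta> \<Lambda>)"
      unfolding a lin_fun_rslice[OF \<rho>] by (rule lin_fun_lslice[OF lin_fun_tens_eval_comult[OF \<rho> \<psi>(1)]])
    also have "\<dots> = tens_eval S \<psi> (\<Delta> \<Lambda>)"
      unfolding S_def by (rule coassoc[OF \<nu> \<rho> \<psi>(1), symmetric])
    also have "\<dots> = \<psi> (lslice scale S (\<Delta> \<Lambda>))"
      by (rule lin_fun_lslice[OF \<psi>(1), symmetric])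
    also have "\<dots> = \<mu> (lslice scale S (\<Delta> \<Lambda>))"
      using \<psi>(2) lslice_mem_V_left[OF S] unfolding V_def by blast
    also have "\<dots> = S g"
      by (rule \<mu>_lslice[OF S])
    also have "\<dots> = \<nu> g * \<rho> g"
      unfolding S_def using g \<nu> \<rho> by (rule group_like_comult)
    also have "\<dots> = \<mu> a * \<rho> g"
      unfolding a \<mu>_lslice[OF \<nu>] ..
    also have "\<dots> = \<rho> (scale (\<mu> a) g)"
      using \<rho> unfolding lin_fun_def by simp
    finally show "\<rho> (rslice scale \<psi> (\<Delta> a)) = \<rho> (scale (\<mu> a) g)" .
  qed
  have V: "subspace V"
    unfolding V_def by (rule subspace_V_left)
  show ?thesis
    unfolding cointegrals_def mem_Collect_eq
  proof (intro conjI allI ballI impI)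
    fix \<psi> a assume "lin_fun scale \<psi> \<and> (\<forall>x\<in>V. \<psi> x = ?\<phi> x)" "a \<in> V"
    then show "rslice scale \<psi> (\<Delta> a) = scale (?\<phi> a) g"
      using cointegral_identity unfolding V_def V_left_def by auto
  qed (use V \<mu>(1) in \<open>auto simp: lin_fun_def subspace_add subspace_scale\<close>)
qed

lemma exists_normalized_cointegral:
  assumes "group_like scale \<Delta> g" "g \<in> V_right scale \<Delta> \<Lambda>"
  obtains \<phi> where "\<phi> \<in> cointegrals scale \<Delta> g (V_left scale \<Delta> \<Lambda>)" "\<phi> \<Lambda> = 1"
proof -
  obtain \<mu> where \<mu>: "lin_fun scale \<mu>" "rslice scale \<mu> (\<Delta> \<Lambda>) = g"
    using assms(2) unfolding V_right_def by blast
  obtain \<epsilon> where \<epsilon>: "lin_fun scale \<epsilon>" "\<And>a. lslice scale \<epsilon> (\<Delta> a) = a"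
    using obtain_counit by blast
  have "\<mu> \<Lambda> = \<epsilon> g"
    using lin_fun_lslice_eq_rslice[OF \<mu>(1) \<epsilon>(1), of "\<Delta> \<Lambda>"] \<epsilon>(2) \<mu>(2) by simp
  also have "\<dots> = 1"
    using counit_group_like assms(1) \<epsilon> by blast
  finally show thesis
    using that restriction_mem_cointegrals[OF assms(1) \<mu>] mem_V_left_self by simp
qed

end

theorem mainTheorem14:
  fixes sc :: "'k::field \<Rightarrow> 'c::ab_group_add \<Rightarrow> 'c"
    and \<Delta> :: "'c \<Rightarrow> ('c \<times> 'c) list"
    and g \<Lambda> :: 'c
  assumes "coalgebra sc \<Delta>"
    and "group_like sc \<Delta> g"
  shows "(g \<in> V_right sc \<Delta> \<Lambda> \<longrightarrow> fun_dim (cointegrals sc \<Delta> g (V_left sc \<Delta> \<Lambda>)) = 1)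
       \<and> (g \<notin> V_right sc \<Delta> \<Lambda> \<longrightarrow> fun_dim (cointegrals sc \<Delta> g (V_left sc \<Delta> \<Lambda>)) = 0)
       \<and> (\<forall>\<phi>\<in>cointegrals sc \<Delta> g (V_left sc \<Delta> \<Lambda>). \<phi> \<noteq> (\<lambda>_. 0) \<longleftrightarrow> \<phi> \<Lambda> \<noteq> 0)"
proof -
  interpret coalgebra_space sc \<Delta>
    using assms(1) by unfold_locales
  define L where "L = cointegrals sc \<Delta> g (V_left sc \<Delta> \<Lambda>)"
  have nonzero_iff: "\<forall>\<phi>\<in>L. \<phi> \<noteq> (\<lambda>_. 0) \<longleftrightarrow> \<phi> \<Lambda> \<noteq> 0"
    using cointegral_eq_zero_iff unfolding L_def by blast
  have "fun_dim L = 1" if g: "g \<in> V_right sc \<Delta> \<Lambda>"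
  proof -
    obtain \<phi>\<^sub>1 where "\<phi>\<^sub>1 \<in> L" "\<phi>\<^sub>1 \<Lambda> = 1"
      using exists_normalized_cointegral[OF assms(2) g] unfolding L_def by blast
    moreover have "\<exists>c. \<phi> = (\<lambda>x. c * \<phi>\<^sub>1 x)" if "\<phi> \<in> L" for \<phi>
      using cointegral_multiple that \<open>\<phi>\<^sub>1 \<in> L\<close> \<open>\<phi>\<^sub>1 \<Lambda> = 1\<close> unfolding L_def by blast
    ultimately show ?thesis
      using nonzero_iff by (intro fun_dim_eq_1[of \<phi>\<^sub>1]) auto
  qed
  moreover have "fun_dim L = 0" if "g \<notin> V_right sc \<Delta> \<Lambda>"
    using V_right_if_cointegral_nonzero that cointegral_eq_zero_iff
    unfolding L_def by (intro fun_dim_eq_0) blast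
  ultimately show ?thesis
    using nonzero_iff unfolding L_def by blast
qed

end
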